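(* For all $X\subseteq\mathrm{Bunch}$ and $Y\in\mathcal C$, the set $X-\!\!\bullet\,Y=\{\Delta\in\mathrm{Bunch}\mid\forall\Delta'\in X.\ (\Delta\mathbin{,}\Delta')\in Y\}$ belongs to $\mathcal C$ (i.e. is closed).
   Context: Formulas of BI: $\varphi,\psi ::= \top \mid \bot \mid \varphi\wedge\psi \mid \varphi\vee\psi \mid \varphi\to\psi \mid \mathsf{emp} \mid \varphi\ast\psi \mid \varphi -\!\!\ast\, \psi \mid a$, $a\in\mathrm{Atom}$. Bunches are finite binary trees whose leaves are formulas or empty bunches $\varnothing_m,\varnothing_a$ and whose internal nodes are labelled by the multiplicative comma ($\Delta_1\mathbin{,}\Delta_2$) or the additive semicolon ($\Delta_1\mathbin{;}\Delta_2$). A bunched context $\Delta(-)$ is a bunch with one leaf replaced by a hole; $\Delta(\Gamma)$ fills it with $\Gamma$. Bunch equivalence $\equiv$ is the least equivalence relation making $\mathbin{,}$ commutative, associative with unit $\varnothing_m$, $\mathbin{;}$ commutative, associative with unit $\varnothing_a$, and closed under contexts; $\mathrm{Bunch}$ is the set of bunches modulo $\equiv$, a commutative monoid under $\Delta\cdot\Delta'=(\Delta\mathbin{,}\Delta')$ with unit $\varnothing_m$, and $X-\!\!\bullet\,Y$ denotes the residual of this monoid's pointwise product on $\mathcal P(\mathrm{Bunch})$. The cut-free BI sequent calculus ($\Delta\vdash_{\mathsf{cf}}\varphi$) has the rules: (ax) $a\vdash a$ for atoms $a$; (equiv) from $\Delta'\vdash\varphi$, $\Delta\equiv\Delta'$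 infer $\Delta\vdash\varphi$; (W;) from $\Delta(\Delta_1)\vdash\varphi$ infer $\Delta(\Delta_1\mathbin{;}\Delta_2)\vdash\varphi$; (C;) from $\Delta(\Delta_1\mathbin{;}\Delta_1)\vdash\varphi$ infer $\Delta(\Delta_1)\vdash\varphi$; (empR) $\varnothing_m\vdash\mathsf{emp}$; (empL) from $\Delta(\varnothing_m)\vdash\varphi$ infer $\Delta(\mathsf{emp})\vdash\varphi$; ($\ast$R) from $\Delta_1\vdash\varphi$, $\Delta_2\vdash\psi$ infer $\Delta_1\mathbin{,}\Delta_2\vdash\varphi\ast\psi$; ($\ast$L) from $\Delta(\varphi\mathbin{,}\psi)\vdash\chi$ infer $\Delta(\varphi\ast\psi)\vdash\chi$; ($-\!\ast$R) from $\Delta\mathbin{,}\varphi\vdash\psi$ infer $\Delta\vdash\varphi-\!\!\ast\,\psi$; ($-\!\ast$L) from $\Delta_1\vdash\varphi$, $\Delta(\Delta_2\mathbin{,}\psi)\vdash\chi$ infer $\Delta((\Delta_1\mathbin{,}\Delta_2)\mathbin{,}(\varphi-\!\!\ast\,\psi))\vdash\chi$; ($\top$R) $\varnothing_a\vdash\top$; ($\top$L) from $\Delta(\varnothing_a)\vdash\varphi$ infer $\Delta(\top)\vdash\varphi$; ($\wedge$R) from $\Delta_1\vdash\varphi$, $\Delta_2\vdash\psi$ infer $\Delta_1\mathbin{;}\Delta_2\vdash\varphi\wedge\psi$; ($\wedge$L) from $\Delta(\varphi\mathbin{;}\psi)\vdash\chi$ infer $\Delta(\varphi\wedge\psi)\vdash\chi$;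 ($\to$R) from $\Delta\mathbin{;}\varphi\vdash\psi$ infer $\Delta\vdash\varphi\to\psi$; ($\to$L) from $\Delta_1\vdash\varphi$, $\Delta(\Delta_2\mathbin{;}\psi)\vdash\chi$ infer $\Delta((\Delta_1\mathbin{;}\Delta_2)\mathbin{;}(\varphi\to\psi))\vdash\chi$; ($\bot$L) $\Delta(\bot)\vdash\varphi$; ($\vee$R1/2) from $\Delta\vdash\varphi$ (resp. $\Delta\vdash\psi$) infer $\Delta\vdash\varphi\vee\psi$; ($\vee$L) from $\Delta(\varphi)\vdash\chi$, $\Delta(\psi)\vdash\chi$ infer $\Delta(\varphi\vee\psi)\vdash\chi$. (No cut rule.) For a formula $\varphi$, $[\![\varphi]\!]^{\mathrm{out}}=\{\Delta\in\mathrm{Bunch}\mid\Delta\vdash_{\mathsf{cf}}\varphi\}$. For $X\subseteq\mathrm{Bunch}$, $\mathrm{cl}(X)=\bigcap\{[\![\varphi]\!]^{\mathrm{out}}\mid X\subseteq[\![\varphi]\!]^{\mathrm{out}}\}$, and $\mathcal C=\{X\subseteq\mathrm{Bunch}\mid X=\mathrm{cl}(X)\}$. *)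

theory Defs
  imports Main
begin

datatype 'a fml =
    FTop | FBot | FAnd "'a fml" "'a fml" | FOr "'a fml" "'a fml" | FImp "'a fml" "'a fml"
  | FEmp | FStar "'a fml" "'a fml" | FWand "'a fml" "'a fml" | FAtom 'a

datatype 'a bunch =
    BFml "'a fml"
  | EmpM
  | EmpA
  | Comma "'a bunch" "'a bunch"
  | Semi "'a bunch" "'a bunch"

datatype 'a ctx =
    Hole
  | CommaL "'a ctx" "'a bunch" | CommaR "'a bunch" "'a ctx"
  | SemiL "'a ctx" "'a bunch"  | SemiR "'a bunch" "'a ctx"

fun fill :: "'a ctx \<Rightarrow> 'a bunch \<Rightarrow> 'a bunch" where
  "fill Hole G = G"
| "fill (CommaL C D) G = Comma (fill C G) D"
| "fill (CommaR D C) G = Comma D (fill C G)"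
| "fill (SemiL C D) G = Semi (fill C G) D"
| "fill (SemiR D C) G = Semi D (fill C G)"

inductive beq :: "'a bunch \<Rightarrow> 'a bunch \<Rightarrow> bool" where
  beq_refl: "beq G G"
| beq_sym: "beq G G' \<Longrightarrow> beq G' G"
| beq_trans: "beq G G' \<Longrightarrow> beq G' G'' \<Longrightarrow> beq G G''"
| comma_comm: "beq (Comma G1 G2) (Comma G2 G1)"
| comma_assoc: "beq (Comma (Comma G1 G2) G3) (Comma G1 (Comma G2 G3))"
| comma_unit: "beq (Comma G EmpM) G"
| semi_comm: "beq (Semi G1 G2) (Semi G2 G1)"
| semi_assoc: "beq (Semi (Semi G1 G2) G3) (Semi G1 (Semi G2 G3))"
| semi_unit: "beq (Semi G EmpA) G"
| beq_ctx: "beq G G' \<Longrightarrow> beq (fill C G) (fill C G')"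

lemma equivp_beq: "equivp beq"
  by (intro equivpI reflpI sympI transpI) (auto intro: beq.intros)

quotient_type 'a Bunch = "'a bunch" / beq
  by (rule equivp_beq)

inductive cf :: "'a bunch \<Rightarrow> 'a fml \<Rightarrow> bool" where
  ax: "cf (BFml (FAtom a)) (FAtom a)"
| equiv: "cf D' \<phi> \<Longrightarrow> beq D D' \<Longrightarrow> cf D \<phi>"
| weakSemi: "cf (fill C D1) \<phi> \<Longrightarrow> cf (fill C (Semi D1 D2)) \<phi>"
| contrSemi: "cf (fill C (Semi D1 D1)) \<phi> \<Longrightarrow> cf (fill C D1) \<phi>"
| empR: "cf EmpM FEmp"
| empL: "cf (fill C EmpM) \<phi> \<Longrightarrow> cf (fill C (BFml FEmp)) \<phi>"
| starR: "cf D1 \<phi> \<Longrightarrow> cf D2 \<psi> \<Longrightarrow> cf (Comma D1 D2) (FStar \<phi> \<psi>)"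
| starL: "cf (fill C (Comma (BFml \<phi>) (BFml \<psi>))) \<chi> \<Longrightarrow> cf (fill C (BFml (FStar \<phi> \<psi>))) \<chi>"
| wandR: "cf (Comma D (BFml \<phi>)) \<psi> \<Longrightarrow> cf D (FWand \<phi> \<psi>)"
| wandL: "cf D1 \<phi> \<Longrightarrow> cf (fill C (Comma D2 (BFml \<psi>))) \<chi> \<Longrightarrow>
          cf (fill C (Comma (Comma D1 D2) (BFml (FWand \<phi> \<psi>)))) \<chi>"
| topR: "cf EmpA FTop"
| topL: "cf (fill C EmpA) \<phi> \<Longrightarrow> cf (fill C (BFml FTop)) \<phi>"
| andR: "cf D1 \<phi> \<Longrightarrow> cf D2 \<psi> \<Longrightarrow> cf (Semi D1 D2) (FAnd \<phi> \<psi>)"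
| andL: "cf (fill C (Semi (BFml \<phi>) (BFml \<psi>))) \<chi> \<Longrightarrow> cf (fill C (BFml (FAnd \<phi> \<psi>))) \<chi>"
| impR: "cf (Semi D (BFml \<phi>)) \<psi> \<Longrightarrow> cf D (FImp \<phi> \<psi>)"
| impL: "cf D1 \<phi> \<Longrightarrow> cf (fill C (Semi D2 (BFml \<psi>))) \<chi> \<Longrightarrow>
          cf (fill C (Semi (Semi D1 D2) (BFml (FImp \<phi> \<psi>)))) \<chi>"
| botL: "cf (fill C (BFml FBot)) \<phi>"
| orR1: "cf D \<phi> \<Longrightarrow> cf D (FOr \<phi> \<psi>)"
| orR2: "cf D \<psi> \<Longrightarrow> cf D (FOr \<phi> \<psi>)"
| orL: "cf (fill C (BFml \<phi>)) \<chi> \<Longrightarrow> cf (fill C (BFml \<psi>)) \<chi> \<Longrightarrow> cf (fill C (BFml (FOr \<phi> \<psi>))) \<chi>"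

definition bcomma :: "'a Bunch \<Rightarrow> 'a Bunch \<Rightarrow> 'a Bunch" where
  "bcomma D D' = abs_Bunch (Comma (rep_Bunch D) (rep_Bunch D'))"

definition resid :: "'a Bunch set \<Rightarrow> 'a Bunch set \<Rightarrow> 'a Bunch set" where
  "resid X Y = {D. \<forall>D'\<in>X. bcomma D D' \<in> Y}"

definition out :: "'a fml \<Rightarrow> 'a Bunch set" where
  "out \<phi> = {D. cf (rep_Bunch D) \<phi>}"

definition cl :: "'a Bunch set \<Rightarrow> 'a Bunch set" where
  "cl X = \<Inter> {out \<phi> | \<phi>. X \<subseteq> out \<phi>}"

definition closedSets :: "'a Bunch set set" where
  "closedSets = {X. X = cl X}"

end

theory Submission
  imports Defs
begin

text \<open>
  Closed sets are exactly the intersections of sets \<open>[[\<phi>]]out\<close>, so for closed \<open>Y\<close> the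
  residual \<open>X -\<bullet> Y\<close> is the intersection, over \<open>\<Delta>' \<in> X\<close> and \<open>\<phi>\<close> with \<open>Y \<subseteq> [[\<phi>]]out\<close>,
  of the sets \<open>{\<Delta> | \<Delta>, \<Delta>' \<turnstile> \<phi>}\<close>. Each of these is \<open>[[F \<Delta>' -* \<phi>]]out\<close>, where \<open>F \<Delta>'\<close>
  reads the commas of \<open>\<Delta>'\<close> as \<open>*\<close>, the semicolons as \<open>\<and>\<close> and the empty bunches as \<open>emp\<close>
  and \<open>\<top>\<close>. That identity needs the invertibility of \<open>-*R\<close> and of the left rules for \<open>*\<close>,
  \<open>\<and>\<close>, \<open>emp\<close>, \<open>\<top>\<close> in the cut-free calculus. The latter holds because unfolding these
  connectives everywhere in a bunch at once commutes with every rule, which avoids any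
  reasoning about overlapping contexts.
\<close>

lemma cf_wandR_inv: "cf D (FWand A B) \<Longrightarrow> cf (Comma D (BFml A)) B"
proof (induction D "FWand A B" rule: cf.induct)
  case (equiv D' D)
  have "beq (Comma D (BFml A)) (Comma D' (BFml A))"
    using beq.beq_ctx[OF equiv.hyps(3), of "CommaL Hole (BFml A)"] by simp
  then show ?case using cf.equiv equiv.hyps(2) by blast
next
  case weakSemi then show ?case by (metis cf.weakSemi fill.simps(2))
next
  case contrSemi then show ?case by (metis cf.contrSemi fill.simps(2))
next
  case empL then show ?case by (metis cf.empL fill.simps(2))
next
  case starL then show ?case by (metis cf.starL fill.simps(2))
next
  case topL then show ?case by (metis cf.topL fill.simps(2))
next
  case andL then show ?case by (metis cf.andL fill.simps(2))
next
  case wandL then show ?case by (metis cf.wandL fill.simps(2))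
next
  case impL then show ?case by (metis cf.impL fill.simps(2))
next
  case botL then show ?case by (metis cf.botL fill.simps(2))
next
  case orL then show ?case by (metis cf.orL fill.simps(2))
qed auto

fun ctx_comp :: "'a ctx \<Rightarrow> 'a ctx \<Rightarrow> 'a ctx" where
  "ctx_comp Hole D = D"
| "ctx_comp (CommaL C B) D = CommaL (ctx_comp C D) B"
| "ctx_comp (CommaR B C) D = CommaR B (ctx_comp C D)"
| "ctx_comp (SemiL C B) D = SemiL (ctx_comp C D) B"
| "ctx_comp (SemiR B C) D = SemiR B (ctx_comp C D)"

lemma fill_ctx_comp [simp]: "fill (ctx_comp C D) G = fill C (fill D G)"
  by (induction C) auto

fun fml_of_bunch :: "'a bunch \<Rightarrow> 'a fml" where
  "fml_of_bunch (BFml f) = f"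
| "fml_of_bunch EmpM = FEmp"
| "fml_of_bunch EmpA = FTop"
| "fml_of_bunch (Comma a b) = FStar (fml_of_bunch a) (fml_of_bunch b)"
| "fml_of_bunch (Semi a b) = FAnd (fml_of_bunch a) (fml_of_bunch b)"

fun unfold_fml :: "'a fml \<Rightarrow> 'a bunch" where
  "unfold_fml (FStar a b) = Comma (unfold_fml a) (unfold_fml b)"
| "unfold_fml (FAnd a b) = Semi (unfold_fml a) (unfold_fml b)"
| "unfold_fml FEmp = EmpM"
| "unfold_fml FTop = EmpA"
| "unfold_fml f = BFml f"

fun unfold_bunch :: "'a bunch \<Rightarrow> 'a bunch" where
  "unfold_bunch (BFml f) = unfold_fml f"
| "unfold_bunch EmpM = EmpM"
| "unfold_bunch EmpA = EmpA"
| "unfold_bunch (Comma a b) = Comma (unfold_bunch a) (unfold_bunch b)"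
| "unfold_bunch (Semi a b) = Semi (unfold_bunch a) (unfold_bunch b)"

fun unfold_ctx :: "'a ctx \<Rightarrow> 'a ctx" where
  "unfold_ctx Hole = Hole"
| "unfold_ctx (CommaL C D) = CommaL (unfold_ctx C) (unfold_bunch D)"
| "unfold_ctx (CommaR D C) = CommaR (unfold_bunch D) (unfold_ctx C)"
| "unfold_ctx (SemiL C D) = SemiL (unfold_ctx C) (unfold_bunch D)"
| "unfold_ctx (SemiR D C) = SemiR (unfold_bunch D) (unfold_ctx C)"

lemma unfold_bunch_fill [simp]: "unfold_bunch (fill C G) = fill (unfold_ctx C) (unfold_bunch G)"
  by (induction C) auto

lemma unfold_fml_fml_of_bunch [simp]: "unfold_fml (fml_of_bunch G) = unfold_bunch G"
  by (induction G) auto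

lemma beq_unfold_bunch: "beq D D' \<Longrightarrow> beq (unfold_bunch D) (unfold_bunch D')"
proof (induction rule: beq.induct)
  case beq_ctx
  then show ?case by (simp add: beq.beq_ctx)
qed (auto intro: beq.intros)

lemma cf_fill_unfold_fml: "cf (fill C (unfold_fml \<phi>)) \<chi> \<Longrightarrow> cf (fill C (BFml \<phi>)) \<chi>"
proof (induction \<phi> arbitrary: C)
  case (FAnd a b)
  have "cf (fill (ctx_comp C (SemiL Hole (unfold_fml b))) (unfold_fml a)) \<chi>"
    using FAnd.prems by simp
  then have "cf (fill (ctx_comp C (SemiR (BFml a) Hole)) (unfold_fml b)) \<chi>"
    using FAnd.IH(1) by fastforce
  then have "cf (fill C (Semi (BFml a) (BFml b))) \<chi>"
    using FAnd.IH(2) by fastforce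
  then show ?case by (rule cf.andL)
next
  case (FStar a b)
  have "cf (fill (ctx_comp C (CommaL Hole (unfold_fml b))) (unfold_fml a)) \<chi>"
    using FStar.prems by simp
  then have "cf (fill (ctx_comp C (CommaR (BFml a) Hole)) (unfold_fml b)) \<chi>"
    using FStar.IH(1) by fastforce
  then have "cf (fill C (Comma (BFml a) (BFml b))) \<chi>"
    using FStar.IH(2) by fastforce
  then show ?case by (rule cf.starL)
qed (auto intro: cf.empL cf.topL)

lemma cf_fill_unfold_bunch: "cf (fill C (unfold_bunch G)) \<chi> \<Longrightarrow> cf (fill C G) \<chi>"
proof (induction G arbitrary: C)
  case (BFml f)
  then show ?case by (simp add: cf_fill_unfold_fml)
next
  case (Comma a b)
  have "cf (fill (ctx_comp C (CommaL Hole (unfold_bunch b))) (unfold_bunch a)) \<chi>"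
    using Comma.prems by simp
  then have "cf (fill (ctx_comp C (CommaR a Hole)) (unfold_bunch b)) \<chi>"
    using Comma.IH(1) by fastforce
  then show ?case using Comma.IH(2) by fastforce
next
  case (Semi a b)
  have "cf (fill (ctx_comp C (SemiL Hole (unfold_bunch b))) (unfold_bunch a)) \<chi>"
    using Semi.prems by simp
  then have "cf (fill (ctx_comp C (SemiR a Hole)) (unfold_bunch b)) \<chi>"
    using Semi.IH(1) by fastforce
  then show ?case using Semi.IH(2) by fastforce
qed auto

lemma cf_unfold_bunch: "cf D \<chi> \<Longrightarrow> cf (unfold_bunch D) \<chi>"
proof (induction rule: cf.induct)
  case equiv
  then show ?case using beq_unfold_bunch cf.equiv by blast
next
  case contrSemi
  then show ?case using cf.contrSemi by fastforce
next
  case (wandR D \<phi> \<psi>)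
  then have "cf (fill (CommaR (unfold_bunch D) Hole) (BFml \<phi>)) \<psi>"
    by (intro cf_fill_unfold_fml) simp
  then show ?case by (simp add: cf.wandR)
next
  case (wandL D1 \<phi> C D2 \<psi> \<chi>)
  then have "cf (fill (ctx_comp (unfold_ctx C) (CommaR (unfold_bunch D2) Hole)) (BFml \<psi>)) \<chi>"
    by (intro cf_fill_unfold_fml) simp
  then show ?case using wandL.IH(1) by (simp add: cf.wandL)
next
  case (impR D \<phi> \<psi>)
  then have "cf (fill (SemiR (unfold_bunch D) Hole) (BFml \<phi>)) \<psi>"
    by (intro cf_fill_unfold_fml) simp
  then show ?case by (simp add: cf.impR)
next
  case (impL D1 \<phi> C D2 \<psi> \<chi>)
  then have "cf (fill (ctx_comp (unfold_ctx C) (SemiR (unfold_bunch D2) Hole)) (BFml \<psi>)) \<chi>"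
    by (intro cf_fill_unfold_fml) simp
  then show ?case using impL.IH(1) by (simp add: cf.impL)
next
  case (botL C \<phi>)
  show ?case using cf.botL[of "unfold_ctx C"] by simp
next
  case (orL C \<phi> \<chi> \<psi>)
  have "cf (fill (unfold_ctx C) (BFml \<phi>)) \<chi>" "cf (fill (unfold_ctx C) (BFml \<psi>)) \<chi>"
    using orL.IH by (intro cf_fill_unfold_fml; simp)+
  then show ?case by (simp add: cf.orL)
qed (simp_all add: cf.ax cf.weakSemi cf.empR cf.starR cf.topR cf.andR cf.orR1 cf.orR2)

lemma cf_unfold_bunch_iff: "cf (unfold_bunch D) \<chi> \<longleftrightarrow> cf D \<chi>"
  using cf_unfold_bunch cf_fill_unfold_bunch[of Hole] by auto

lemma cf_fill_fml_of_bunch_iff: "cf (fill C (BFml (fml_of_bunch G))) \<chi> \<longleftrightarrow> cf (fill C G) \<chi>"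
  by (metis cf_unfold_bunch_iff unfold_bunch.simps(1) unfold_bunch_fill unfold_fml_fml_of_bunch)

lemma cf_rep_bcomma:
  "cf (rep_Bunch (bcomma G D)) \<phi> \<longleftrightarrow> cf (Comma (rep_Bunch G) (rep_Bunch D)) \<phi>"
proof -
  have "beq (rep_Bunch (bcomma G D)) (Comma (rep_Bunch G) (rep_Bunch D))"
    unfolding bcomma_def using Quotient3_rep_abs[OF Quotient3_Bunch] beq.beq_refl by blast
  then show ?thesis using cf.equiv beq.beq_sym by blast
qed

lemma out_wand_fml_of_bunch_iff:
  "G \<in> out (FWand (fml_of_bunch (rep_Bunch D)) \<phi>) \<longleftrightarrow> bcomma G D \<in> out \<phi>"
proof -
  have "G \<in> out (FWand (fml_of_bunch (rep_Bunch D)) \<phi>) \<longleftrightarrow>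
        cf (fill (CommaR (rep_Bunch G) Hole) (BFml (fml_of_bunch (rep_Bunch D)))) \<phi>"
    unfolding out_def using cf.wandR cf_wandR_inv by fastforce
  also have "\<dots> \<longleftrightarrow> bcomma G D \<in> out \<phi>"
    unfolding cf_fill_fml_of_bunch_iff out_def by (simp add: cf_rep_bcomma)
  finally show ?thesis .
qed

lemma cl_extensive: "X \<subseteq> cl X"
  unfolding cl_def by blast

lemma cl_mono: "X \<subseteq> X' \<Longrightarrow> cl X \<subseteq> cl X'"
  unfolding cl_def by blast

lemma closedSets_iff_cl_subset: "X \<in> closedSets \<longleftrightarrow> cl X \<subseteq> X"
  unfolding closedSets_def using cl_extensive by blast

lemma out_closed: "out \<phi> \<in> closedSets"
  unfolding closedSets_iff_cl_subset cl_def by blast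

lemma closedSets_INT:
  assumes "\<And>i. i \<in> I \<Longrightarrow> A i \<in> closedSets"
  shows "(\<Inter>i\<in>I. A i) \<in> closedSets"
proof -
  have "cl (\<Inter>i\<in>I. A i) \<subseteq> A i" if "i \<in> I" for i
    using cl_mono[of "\<Inter>i\<in>I. A i" "A i"] assms[OF that] that
    unfolding closedSets_iff_cl_subset by blast
  then show ?thesis unfolding closedSets_iff_cl_subset by blast
qed

lemma closed_eq_INT_out: "X \<in> closedSets \<Longrightarrow> X = (\<Inter>\<phi>\<in>{\<phi>. X \<subseteq> out \<phi>}. out \<phi>)"
  unfolding closedSets_def cl_def by blast

lemma resid_INT_out:
  "resid X (\<Inter>\<phi>\<in>\<Phi>. out \<phi>) = (\<Inter>D\<in>X. \<Inter>\<phi>\<in>\<Phi>. out (FWand (fml_of_bunch (rep_Bunch D)) \<phi>))"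
  unfolding resid_def by (auto simp: out_wand_fml_of_bunch_iff)

theorem lemma6p4:
  fixes X Y :: "'a Bunch set"
  assumes "Y \<in> closedSets"
  shows "resid X Y \<in> closedSets"
proof -
  define \<Phi> where "\<Phi> = {\<phi>. Y \<subseteq> out \<phi>}"
  have "Y = (\<Inter>\<phi>\<in>\<Phi>. out \<phi>)"
    unfolding \<Phi>_def using assms by (rule closed_eq_INT_out)
  then show ?thesis by (simp add: resid_INT_out closedSets_INT out_closed)
qed

end
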